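(* Let $s,k$ be job indices and let $S$ be an $(s,k)$-schedule (with the earliest-deadline property) with $C_{\max}(S)=t$. Suppose $[u,t)$ is a fixed segment of $S$. Then every job $i\le k$ with $u<C_i(S)\le t$ satisfies $C_i(S)=C^{\mathrm{edf}}_{s,i}$.
   Context: Time is discrete (slots $[t,t+1)$). There are $n$ jobs, job $j$ with integer processing time $p_j\ge1$, release time $r_j$, deadline $d_j$; jobs are indexed so that $d_1<\dots<d_n$, release times are pairwise distinct, and the instance is feasible. A (partial) schedule assigns to each slot at most one job so that each job it schedules receives exactly $p_j$ slots within $[r_j,d_j)$; $C_j(S)$ is the completion time of $j$ and $C_{\max}(S)=\max_jC_j(S)$. The earliest-deadline property: whenever $S$ is busy at slot $t$, it executes the released, not yet completed scheduled job with smallest deadline; all schedules are assumed to have this property. For $s\in\{1,\dots,n\}$, $k\in\{0,\dots,n\}$, an $(s,k)$-schedule is a schedule $S$ with $C_{\max}(S)\le d_k$ that schedules exactly the jobs $j\le k$ with $r_s\le r_j<C_{\max}(S)$ (the empty schedule counts, with $C_{\max}=r_s$). For $r_i\ge r_s$, $C^{\mathrm{edf}}_{s,i}$ is the minimum completion time of job $i$ over all $(s,i)$-schedules that schedule $i$. An interval $[t',t)$ in which $S$ is busy at every slot is a fixed segment of $S$ if every job executed by $S$ in $[t',t)$ is released in $[t',t)$ and has all its slots in $[t',t)$. *)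

theory Defs
  imports Main
begin

(* Jobs are 1..n; p r d :: nat => nat give processing time, release time, deadline.
   Time slots are natural numbers; slot t is the interval [t,t+1).
   A (partial) schedule is a map S :: nat => nat option assigning to each slot at most one job. *)

definition jobs_of :: "(nat \<Rightarrow> nat option) \<Rightarrow> nat set" where
  "jobs_of S = {j. \<exists>t. S t = Some j}"

definition valid_schedule ::
  "nat \<Rightarrow> (nat \<Rightarrow> nat) \<Rightarrow> (nat \<Rightarrow> nat) \<Rightarrow> (nat \<Rightarrow> nat) \<Rightarrow> (nat \<Rightarrow> nat option) \<Rightarrow> bool" where
  "valid_schedule n p r d S \<longleftrightarrow>
     (\<forall>t j. S t = Some j \<longrightarrow> 1 \<le> j \<and> j \<le> n \<and> r j \<le> t \<and> t < d j) \<and>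
     (\<forall>j \<in> jobs_of S. card {t. S t = Some j} = p j)"

definition compl :: "(nat \<Rightarrow> nat option) \<Rightarrow> nat \<Rightarrow> nat" where
  "compl S j = Suc (Max {t. S t = Some j})"

(* C_max; the empty schedule gets C_max = r_s (convention for (s,k)-schedules) *)
definition cmax :: "(nat \<Rightarrow> nat) \<Rightarrow> nat \<Rightarrow> (nat \<Rightarrow> nat option) \<Rightarrow> nat" where
  "cmax r s S = (if jobs_of S = {} then r s else Max (compl S ` jobs_of S))"

definition edf :: "(nat \<Rightarrow> nat) \<Rightarrow> (nat \<Rightarrow> nat) \<Rightarrow> (nat \<Rightarrow> nat option) \<Rightarrow> bool" where
  "edf r d S \<longleftrightarrow>
     (\<forall>t j j'. S t = Some j \<longrightarrow> j' \<in> jobs_of S \<longrightarrow> r j' \<le> t \<longrightarrow> t < compl S j' \<longrightarrow> d j \<le> d j')"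

definition sk_schedule ::
  "nat \<Rightarrow> (nat \<Rightarrow> nat) \<Rightarrow> (nat \<Rightarrow> nat) \<Rightarrow> (nat \<Rightarrow> nat) \<Rightarrow> nat \<Rightarrow> nat \<Rightarrow> (nat \<Rightarrow> nat option) \<Rightarrow> bool" where
  "sk_schedule n p r d s k S \<longleftrightarrow>
     valid_schedule n p r d S \<and> edf r d S \<and> cmax r s S \<le> d k \<and>
     jobs_of S = {j. 1 \<le> j \<and> j \<le> k \<and> r s \<le> r j \<and> r j < cmax r s S}"

definition C_edf ::
  "nat \<Rightarrow> (nat \<Rightarrow> nat) \<Rightarrow> (nat \<Rightarrow> nat) \<Rightarrow> (nat \<Rightarrow> nat) \<Rightarrow> nat \<Rightarrow> nat \<Rightarrow> nat" where
  "C_edf n p r d s i =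
     (LEAST c. \<exists>S. sk_schedule n p r d s i S \<and> i \<in> jobs_of S \<and> compl S i = c)"

definition fixed_segment :: "(nat \<Rightarrow> nat) \<Rightarrow> (nat \<Rightarrow> nat option) \<Rightarrow> nat \<Rightarrow> nat \<Rightarrow> bool" where
  "fixed_segment r S t' t \<longleftrightarrow>
     (\<forall>x. t' \<le> x \<and> x < t \<longrightarrow> S x \<noteq> None) \<and>
     (\<forall>x j. t' \<le> x \<and> x < t \<and> S x = Some j \<longrightarrow>
        t' \<le> r j \<and> r j < t \<and> (\<forall>y. S y = Some j \<longrightarrow> t' \<le> y \<and> y < t))"

definition instance_ok :: "nat \<Rightarrow> (nat \<Rightarrow> nat) \<Rightarrow> (nat \<Rightarrow> nat) \<Rightarrow> (nat \<Rightarrow> nat) \<Rightarrow> bool" where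
  "instance_ok n p r d \<longleftrightarrow>
     (\<forall>j. 1 \<le> j \<and> j \<le> n \<longrightarrow> 1 \<le> p j) \<and>
     (\<forall>i j. 1 \<le> i \<and> i < j \<and> j \<le> n \<longrightarrow> d i < d j) \<and>
     inj_on r {1..n} \<and>
     (\<exists>S. valid_schedule n p r d S \<and> jobs_of S = {1..n})"

end

theory Submission
  imports Defs
begin

text \<open>Jobs \<open>j \<le> i\<close> are exactly the jobs with deadline at most \<open>d i\<close>. Cutting \<open>S\<close> down to these
  jobs and to the slots before \<open>c = C_i(S)\<close> gives an \<open>(s,i)\<close>-schedule: by the earliest-deadline
  property no job \<open>j < i\<close> released before \<open>c\<close> can still run at or after \<open>c\<close>, since \<open>i\<close> runs in
  slot \<open>c - 1\<close>. Hence \<open>C^edf_{s,i} \<le> c\<close>.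

  Conversely, inside the fixed segment take \<open>a\<close> just after the last slot before \<open>c\<close> occupied by a
  job of index greater than \<open>i\<close> (or \<open>a = u\<close> if there is none). Then \<open>[a, c)\<close> is busy with jobs
  \<open>j \<le> i\<close> released at or after \<open>a\<close>: one released earlier would have preempted that later job.
  In any \<open>(s,i)\<close>-schedule \<open>S'\<close> with \<open>c' = C_i(S') < c\<close>, the jobs of this block released before
  \<open>c'\<close> all run in \<open>[a, c')\<close>, while in \<open>S\<close> they fill \<open>[a, c')\<close> together with slot \<open>c - 1\<close>:
  one slot too many.\<close>

abbreviation slots :: "(nat \<Rightarrow> nat option) \<Rightarrow> nat \<Rightarrow> nat set" where
  "slots S j \<equiv> {x. S x = Some j}"

lemma valid_scheduleD:
  "valid_schedule n p r d S \<Longrightarrow> S x = Some j \<Longrightarrow> 1 \<le> j \<and> j \<le> n \<and> r j \<le> x \<and> x < d j"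
  by (auto simp: valid_schedule_def)

lemma finite_slots:
  assumes "instance_ok n p r d" "valid_schedule n p r d S" "j \<in> jobs_of S"
  shows "finite (slots S j)"
proof -
  from assms(3) obtain x where "S x = Some j" by (auto simp: jobs_of_def)
  with assms(1,2) have "1 \<le> p j" by (auto simp: instance_ok_def dest: valid_scheduleD)
  moreover from assms(2,3) have "card (slots S j) = p j" by (auto simp: valid_schedule_def)
  ultimately show ?thesis using card.infinite by fastforce
qed

lemma slot_less_compl:
  assumes "instance_ok n p r d" "valid_schedule n p r d S" "S x = Some j"
  shows "x < compl S j"
proof -
  have "j \<in> jobs_of S" using assms(3) by (auto simp: jobs_of_def)
  then have "finite (slots S j)" by (rule finite_slots[OF assms(1,2)])
  then show ?thesis using assms(3) by (auto simp: compl_def intro!: le_imp_less_Suc Max_ge)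
qed

lemma last_slot_compl:
  assumes "instance_ok n p r d" "valid_schedule n p r d S" "j \<in> jobs_of S"
  shows "S (compl S j - 1) = Some j"
proof -
  have "slots S j \<noteq> {}" using assms(3) by (auto simp: jobs_of_def)
  then have "Max (slots S j) \<in> slots S j" using finite_slots[OF assms] Max_in by blast
  then show ?thesis by (simp add: compl_def)
qed

lemma release_less_compl:
  assumes "instance_ok n p r d" "valid_schedule n p r d S" "j \<in> jobs_of S"
  shows "r j < compl S j"
  using valid_scheduleD[OF assms(2) last_slot_compl[OF assms]] by (simp add: compl_def)

lemma compl_le_deadline:
  assumes "instance_ok n p r d" "valid_schedule n p r d S" "j \<in> jobs_of S"
  shows "compl S j \<le> d j"
  using valid_scheduleD[OF assms(2) last_slot_compl[OF assms]] by (simp add: compl_def)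

lemma compl_le_cmax:
  assumes "j \<in> jobs_of S" "finite (jobs_of S)"
  shows "compl S j \<le> cmax r s S"
  using assms by (auto simp: cmax_def intro!: Max_ge)

lemma finite_jobs_of_sk_schedule: "sk_schedule n p r d s k S \<Longrightarrow> finite (jobs_of S)"
  by (rule finite_subset[of _ "{..k}"]) (auto simp: sk_schedule_def)

lemma edf_index_le:
  assumes "instance_ok n p r d" "valid_schedule n p r d S" "edf r d S"
    and "S m = Some j'" "j \<in> jobs_of S" "r j \<le> m" "m < compl S j"
  shows "j' \<le> j"
proof (rule ccontr)
  assume "\<not> j' \<le> j"
  moreover obtain x where "S x = Some j" using assms(5) by (auto simp: jobs_of_def)
  ultimately have "d j < d j'"
    using assms(1) valid_scheduleD[OF assms(2)] assms(4) by (auto simp: instance_ok_def)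
  moreover have "d j' \<le> d j" using assms(3-7) by (auto simp: edf_def)
  ultimately show False by simp
qed

lemma edf_slot_less_compl:
  assumes "instance_ok n p r d" "valid_schedule n p r d S" "edf r d S"
    and "i \<in> jobs_of S" "S y = Some j" "j \<le> i" "r j < compl S i"
  shows "y < compl S i"
proof (rule ccontr)
  assume "\<not> y < compl S i"
  then have "compl S i - 1 < compl S j" using slot_less_compl[OF assms(1,2,5)] by simp
  moreover have "j \<in> jobs_of S" using assms(5) by (auto simp: jobs_of_def)
  ultimately have "i \<le> j"
    using edf_index_le[OF assms(1-3) last_slot_compl[OF assms(1,2,4)]] assms(7) by simp
  then have "j = i" using assms(6) by simp
  then show False using slot_less_compl[OF assms(1,2,5)] \<open>\<not> y < compl S i\<close> by simp
qed

definition restrict_schedule :: "(nat \<Rightarrow> nat option) \<Rightarrow> nat \<Rightarrow> nat \<Rightarrow> nat option" where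
  "restrict_schedule S i x =
     (if x < compl S i \<and> (\<exists>j. S x = Some j \<and> j \<le> i) then S x else None)"

lemma restrict_schedule_SomeD:
  "restrict_schedule S i x = Some j \<Longrightarrow> S x = Some j \<and> x < compl S i \<and> j \<le> i"
  by (auto simp: restrict_schedule_def split: if_splits)

context
  fixes n p r d S i
  assumes inst: "instance_ok n p r d" and valid: "valid_schedule n p r d S" and edf: "edf r d S"
    and i_job: "i \<in> jobs_of S"
begin

lemma jobs_of_restrict_schedule:
  "jobs_of (restrict_schedule S i) = {j \<in> jobs_of S. j \<le> i \<and> r j < compl S i}"
proof (intro set_eqI iffI)
  fix j assume "j \<in> jobs_of (restrict_schedule S i)"
  then obtain x where "restrict_schedule S i x = Some j" by (auto simp: jobs_of_def)
  then show "j \<in> {j \<in> jobs_of S. j \<le> i \<and> r j < compl S i}"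
    using valid_scheduleD[OF valid] by (fastforce simp: jobs_of_def dest: restrict_schedule_SomeD)
next
  fix j assume j: "j \<in> {j \<in> jobs_of S. j \<le> i \<and> r j < compl S i}"
  then obtain x where x: "S x = Some j" by (auto simp: jobs_of_def)
  then have "x < compl S i" using edf_slot_less_compl[OF inst valid edf i_job] j by blast
  then have "restrict_schedule S i x = Some j" using x j by (auto simp: restrict_schedule_def)
  then show "j \<in> jobs_of (restrict_schedule S i)" by (auto simp: jobs_of_def)
qed

lemma slots_restrict_schedule:
  assumes "j \<in> jobs_of (restrict_schedule S i)"
  shows "slots (restrict_schedule S i) j = slots S j"
  using assms edf_slot_less_compl[OF inst valid edf i_job]
  unfolding jobs_of_restrict_schedule by (auto simp: restrict_schedule_def)

lemma compl_restrict_schedule: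
  "j \<in> jobs_of (restrict_schedule S i) \<Longrightarrow> compl (restrict_schedule S i) j = compl S j"
  by (simp add: compl_def slots_restrict_schedule)

lemma i_in_jobs_of_restrict_schedule: "i \<in> jobs_of (restrict_schedule S i)"
  using release_less_compl[OF inst valid i_job] i_job by (simp add: jobs_of_restrict_schedule)

lemma cmax_restrict_schedule: "cmax r s (restrict_schedule S i) = compl S i"
proof -
  let ?R = "restrict_schedule S i"
  have "finite (jobs_of ?R)" by (rule finite_subset[of _ "{..i}"]) (auto simp: jobs_of_restrict_schedule)
  moreover have "compl ?R j \<le> compl S i" if "j \<in> jobs_of ?R" for j
  proof -
    have "j \<in> jobs_of S" "j \<le> i" "r j < compl S i"
      using that by (auto simp: jobs_of_restrict_schedule)
    then have "compl S j - 1 < compl S i"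
      using edf_slot_less_compl[OF inst valid edf i_job last_slot_compl[OF inst valid]] by blast
    then show ?thesis using compl_restrict_schedule[OF that] by (simp add: compl_def)
  qed
  ultimately show ?thesis
    using i_in_jobs_of_restrict_schedule compl_restrict_schedule
    by (auto simp: cmax_def intro!: Max_eqI)
qed

end

lemma sk_schedule_restrict_schedule:
  assumes inst: "instance_ok n p r d" and sk: "sk_schedule n p r d s k S"
    and i_job: "i \<in> jobs_of S" and "i \<le> k"
  shows "sk_schedule n p r d s i (restrict_schedule S i)"
proof -
  let ?R = "restrict_schedule S i"
  from sk have valid: "valid_schedule n p r d S" and edf: "edf r d S"
    and jobs: "jobs_of S = {j. 1 \<le> j \<and> j \<le> k \<and> r s \<le> r j \<and> r j < cmax r s S}"
    by (auto simp: sk_schedule_def)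
  note restrict = jobs_of_restrict_schedule[OF inst valid edf i_job]
    slots_restrict_schedule[OF inst valid edf i_job]
    compl_restrict_schedule[OF inst valid edf i_job]
    cmax_restrict_schedule[OF inst valid edf i_job]
  have "valid_schedule n p r d ?R"
    using valid restrict(1,2) unfolding valid_schedule_def by (auto dest!: restrict_schedule_SomeD)
  moreover have "edf r d ?R"
    using edf restrict(1,3) unfolding edf_def by (auto dest!: restrict_schedule_SomeD)
  moreover have "cmax r s ?R \<le> d i"
    using compl_le_deadline[OF inst valid i_job] restrict(4) by simp
  moreover have "compl S i \<le> cmax r s S"
    using compl_le_cmax[OF i_job finite_jobs_of_sk_schedule[OF sk]] .
  then have "jobs_of ?R = {j. 1 \<le> j \<and> j \<le> i \<and> r s \<le> r j \<and> r j < cmax r s ?R}"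
    using \<open>i \<le> k\<close> by (auto simp: restrict(1,4) jobs)
  ultimately show ?thesis by (simp add: sk_schedule_def)
qed

lemma C_edf_eqI:
  assumes "sk_schedule n p r d s i S" "i \<in> jobs_of S"
    and "\<And>S'. sk_schedule n p r d s i S' \<Longrightarrow> i \<in> jobs_of S' \<Longrightarrow> compl S i \<le> compl S' i"
  shows "C_edf n p r d s i = compl S i"
  unfolding C_edf_def by (rule Least_equality) (use assms in auto)

lemma card_UN_slots:
  assumes "instance_ok n p r d" "valid_schedule n p r d S" "K \<subseteq> jobs_of S" "finite K"
  shows "card (\<Union>j\<in>K. slots S j) = (\<Sum>j\<in>K. p j)"
proof -
  have "card (\<Union>j\<in>K. slots S j) = (\<Sum>j\<in>K. card (slots S j))"
    using assms finite_slots[OF assms(1,2)] by (intro card_UN_disjoint) auto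
  also have "\<dots> = (\<Sum>j\<in>K. p j)"
    using assms(2,3) by (intro sum.cong) (auto simp: valid_schedule_def)
  finally show ?thesis .
qed

lemma edf_slots_subset_window:
  assumes "instance_ok n p r d" "valid_schedule n p r d S" "edf r d S" "i \<in> jobs_of S"
    and "\<And>j. j \<in> K \<Longrightarrow> j \<le> i \<and> a \<le> r j \<and> r j < compl S i"
  shows "(\<Union>j\<in>K. slots S j) \<subseteq> {a..<compl S i}"
proof clarify
  fix j y assume "j \<in> K" "S y = Some j"
  then show "y \<in> {a..<compl S i}"
    using assms(5) valid_scheduleD[OF assms(2)] edf_slot_less_compl[OF assms(1-4)]
    by (meson atLeastLessThan_iff order_trans)
qed

definition urgent_block :: "(nat \<Rightarrow> nat) \<Rightarrow> (nat \<Rightarrow> nat option) \<Rightarrow> nat \<Rightarrow> nat \<Rightarrow> nat \<Rightarrow> bool" where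
  "urgent_block r S i a c \<longleftrightarrow> (\<forall>x. a \<le> x \<and> x < c \<longrightarrow> (\<exists>j. S x = Some j \<and> j \<le> i \<and> a \<le> r j))"

lemma fixed_segment_urgent_block:
  assumes inst: "instance_ok n p r d" and valid: "valid_schedule n p r d S" and edf: "edf r d S"
    and fixed: "fixed_segment r S u t" and i_job: "i \<in> jobs_of S"
    and "u < compl S i" "compl S i \<le> t"
  shows "\<exists>a < compl S i. urgent_block r S i a (compl S i)"
proof -
  define c where "c = compl S i"
  have busy: "\<exists>j. S x = Some j \<and> u \<le> r j" if "u \<le> x" "x < c" for x
  proof -
    have "x < t" using that \<open>compl S i \<le> t\<close> by (simp add: c_def)
    then obtain j where "S x = Some j"
      using fixed \<open>u \<le> x\<close> unfolding fixed_segment_def by blast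
    moreover have "u \<le> r j"
      using fixed \<open>u \<le> x\<close> \<open>x < t\<close> calculation unfolding fixed_segment_def by blast
    ultimately show ?thesis by blast
  qed
  define X where "X = {x. u \<le> x \<and> x < c \<and> (\<exists>j. S x = Some j \<and> i < j)}"
  show ?thesis
  proof (cases "X = {}")
    case True
    have "urgent_block r S i u c"
      unfolding urgent_block_def
    proof (intro allI impI)
      fix x assume x: "u \<le> x \<and> x < c"
      then obtain j where "S x = Some j" "u \<le> r j" using busy by blast
      moreover have "\<not> i < j" using True x calculation unfolding X_def by blast
      ultimately show "\<exists>j. S x = Some j \<and> j \<le> i \<and> u \<le> r j" by (blast intro: leI)
    qed
    then show ?thesis using \<open>u < compl S i\<close> c_def by blast
  next
    case False
    define m where "m = Max X"
    have "finite X" unfolding X_def by (rule finite_subset[of _ "{..<c}"]) auto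
    then have "m \<in> X" and above_m: "\<And>x. x \<in> X \<Longrightarrow> x \<le> m"
      using False by (auto simp: m_def)
    then obtain j' where j': "S m = Some j'" "i < j'" and "u \<le> m" "m < c"
      by (auto simp: X_def)
    have "m \<noteq> c - 1" using j' last_slot_compl[OF inst valid i_job] by (auto simp: c_def)
    then have "Suc m < c" using \<open>m < c\<close> by simp
    have "\<exists>j. S x = Some j \<and> j \<le> i \<and> Suc m \<le> r j" if x: "Suc m \<le> x" "x < c" for x
    proof -
      have "u \<le> x" using x(1) \<open>u \<le> m\<close> by simp
      then obtain j where j: "S x = Some j" using busy x(2) by blast
      have "x \<notin> X" using above_m[of x] x(1) by linarith
      then have "\<not> i < j" using \<open>u \<le> x\<close> x(2) j unfolding X_def by blast
      then have "j \<le> i" by simp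
      moreover have "Suc m \<le> r j"
      proof (rule ccontr)
        assume "\<not> Suc m \<le> r j"
        moreover have "j \<in> jobs_of S" using j by (auto simp: jobs_of_def)
        moreover have "m < compl S j" using slot_less_compl[OF inst valid j] x by simp
        ultimately have "j' \<le> j" using edf_index_le[OF inst valid edf j'(1)] by simp
        then show False using \<open>j \<le> i\<close> j'(2) by simp
      qed
      ultimately show ?thesis using j by blast
    qed
    then have "urgent_block r S i (Suc m) c" by (simp add: urgent_block_def)
    then show ?thesis using \<open>Suc m < c\<close> c_def by blast
  qed
qed

lemma urgent_block_compl_le:
  assumes inst: "instance_ok n p r d" and sk: "sk_schedule n p r d s k S"
    and block: "urgent_block r S i a (compl S i)" and "a < compl S i" and i_job: "i \<in> jobs_of S"
    and sk': "sk_schedule n p r d s i S'" and i_job': "i \<in> jobs_of S'"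
  shows "compl S i \<le> compl S' i"
proof (rule ccontr)
  define c c' where "c = compl S i" and "c' = compl S' i"
  assume "\<not> compl S i \<le> compl S' i"
  then have "c' < c" by (simp add: c_def c'_def)
  from sk have valid: "valid_schedule n p r d S"
    and jobs: "jobs_of S = {j. 1 \<le> j \<and> j \<le> k \<and> r s \<le> r j \<and> r j < cmax r s S}"
    by (auto simp: sk_schedule_def)
  from sk' have valid': "valid_schedule n p r d S'" and edf': "edf r d S'"
    and jobs': "jobs_of S' = {j. 1 \<le> j \<and> j \<le> i \<and> r s \<le> r j \<and> r j < cmax r s S'}"
    by (auto simp: sk_schedule_def)
  define K where "K = {j \<in> jobs_of S. j \<le> i \<and> a \<le> r j \<and> r j < c'}"
  have "finite K" by (rule finite_subset[of _ "{..i}"]) (auto simp: K_def)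
  have "c' \<le> cmax r s S'"
    unfolding c'_def using compl_le_cmax[OF i_job' finite_jobs_of_sk_schedule[OF sk']] .
  then have "K \<subseteq> jobs_of S'" by (auto simp: K_def jobs jobs')
  have "S (c - 1) = Some i" unfolding c_def by (rule last_slot_compl[OF inst valid i_job])
  have block_slots: "{a..<c'} \<union> {c - 1} \<subseteq> (\<Union>j\<in>K. slots S j)"
  proof
    fix x assume x: "x \<in> {a..<c'} \<union> {c - 1}"
    then have "a \<le> x" "x < c" using \<open>c' < c\<close> \<open>a < compl S i\<close> by (auto simp: c_def)
    then obtain j where j: "S x = Some j" "j \<le> i" "a \<le> r j"
      using block by (auto simp: urgent_block_def c_def)
    have "r j < c'"
    proof (cases "x = c - 1")
      case True
      then have "j = i" using j(1) \<open>S (c - 1) = Some i\<close> by simp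
      then show ?thesis using release_less_compl[OF inst valid' i_job'] by (simp add: c'_def)
    next
      case False
      then show ?thesis using x valid_scheduleD[OF valid j(1)] by auto
    qed
    then have "j \<in> K" using j by (auto simp: K_def jobs_of_def)
    then show "x \<in> (\<Union>j\<in>K. slots S j)" using j(1) by blast
  qed
  have "(\<Union>j\<in>K. slots S' j) \<subseteq> {a..<c'}"
    unfolding c'_def by (rule edf_slots_subset_window[OF inst valid' edf' i_job']) (auto simp: K_def c'_def)
  have "card ({a..<c'} \<union> {c - 1}) \<le> card (\<Union>j\<in>K. slots S j)"
    by (rule card_mono) (use \<open>finite K\<close> finite_slots[OF inst valid] block_slots in \<open>auto simp: K_def\<close>)
  also have "\<dots> = (\<Sum>j\<in>K. p j)"
    by (rule card_UN_slots[OF inst valid _ \<open>finite K\<close>]) (auto simp: K_def)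
  also have "\<dots> = card (\<Union>j\<in>K. slots S' j)"
    by (rule card_UN_slots[OF inst valid' \<open>K \<subseteq> jobs_of S'\<close> \<open>finite K\<close>, symmetric])
  also have "\<dots> \<le> card {a..<c'}"
    by (rule card_mono) (simp, fact)
  finally have "card ({a..<c'} \<union> {c - 1}) \<le> card {a..<c'}" .
  moreover have "c - 1 \<notin> {a..<c'}" using \<open>c' < c\<close> by auto
  ultimately show False by simp
qed

theorem lemma2:
  fixes n :: nat and p r d :: "nat \<Rightarrow> nat" and s k u t :: nat
    and S :: "nat \<Rightarrow> nat option"
  assumes "instance_ok n p r d"
    and "1 \<le> s" and "s \<le> n" and "k \<le> n"
    and "sk_schedule n p r d s k S"
    and "cmax r s S = t"
    and "fixed_segment r S u t"
  shows "\<forall>i. 1 \<le> i \<and> i \<le> k \<and> i \<in> jobs_of S \<and> u < compl S i \<and> compl S i \<le> t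
           \<longrightarrow> compl S i = C_edf n p r d s i"
proof (intro allI impI)
  fix i assume i: "1 \<le> i \<and> i \<le> k \<and> i \<in> jobs_of S \<and> u < compl S i \<and> compl S i \<le> t"
  then have i_job: "i \<in> jobs_of S" and "i \<le> k" by simp_all
  from assms(5) have valid: "valid_schedule n p r d S" and edf: "edf r d S"
    by (simp_all add: sk_schedule_def)
  obtain a where "a < compl S i" and block: "urgent_block r S i a (compl S i)"
    using fixed_segment_urgent_block[OF assms(1) valid edf assms(7) i_job] i by blast
  have "i \<in> jobs_of (restrict_schedule S i)"
    by (rule i_in_jobs_of_restrict_schedule[OF assms(1) valid edf i_job])
  then have restrict_i: "compl (restrict_schedule S i) i = compl S i"
    by (rule compl_restrict_schedule[OF assms(1) valid edf i_job])
  have "C_edf n p r d s i = compl (restrict_schedule S i) i"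
    using urgent_block_compl_le[OF assms(1,5) block \<open>a < compl S i\<close> i_job]
    by (intro C_edf_eqI sk_schedule_restrict_schedule[OF assms(1,5) i_job \<open>i \<le> k\<close>]
        \<open>i \<in> jobs_of (restrict_schedule S i)\<close>) (simp add: restrict_i)
  then show "compl S i = C_edf n p r d s i" by (simp add: restrict_i)
qed

end
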